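(* Let $T$ be a tree on $n$ vertices, with vertex set $\{1,\dots,n\}$, and fix vertices $r$ and $a$ of $T$ (not necessarily distinct). Then $$0\le 2\sum_{b=1}^n d_{r,P_{a,b}}\le n(n-1).$$ The upper bound is achieved if and only if $T$ is a path on $n$ vertices and $r$ and $a$ are its two end vertices; the lower bound is achieved if and only if $r=a$.
   Context: $P_{a,b}$ denotes the unique path in $T$ between $a$ and $b$ (when $a=b$ it is the single vertex $a$). $d_{r,P_{a,b}}$ is the distance in $T$ from $r$ to the vertex of $P_{a,b}$ closest to $r$. *)

theory Defs
  imports Main
begin

definition graph_on :: "'a set \<Rightarrow> ('a \<Rightarrow> 'a \<Rightarrow> bool) \<Rightarrow> bool" where
  "graph_on V E \<longleftrightarrow> (\<forall>u v. E u v \<longrightarrow> u \<in> V \<and> v \<in> V) \<and> (\<forall>u v. E u v \<longrightarrow> E v u) \<and> (\<forall>v. \<not> E v v)"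

definition walk :: "'a set \<Rightarrow> ('a \<Rightarrow> 'a \<Rightarrow> bool) \<Rightarrow> 'a list \<Rightarrow> bool" where
  "walk V E xs \<longleftrightarrow> xs \<noteq> [] \<and> set xs \<subseteq> V \<and> (\<forall>i. Suc i < length xs \<longrightarrow> E (xs ! i) (xs ! Suc i))"

definition connected_graph :: "'a set \<Rightarrow> ('a \<Rightarrow> 'a \<Rightarrow> bool) \<Rightarrow> bool" where
  "connected_graph V E \<longleftrightarrow> (\<forall>u\<in>V. \<forall>v\<in>V. \<exists>xs. walk V E xs \<and> hd xs = u \<and> last xs = v)"

definition is_cycle :: "'a set \<Rightarrow> ('a \<Rightarrow> 'a \<Rightarrow> bool) \<Rightarrow> 'a list \<Rightarrow> bool" where
  "is_cycle V E c \<longleftrightarrow> walk V E c \<and> distinct c \<and> length c \<ge> 3 \<and> E (last c) (hd c)"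

definition is_tree :: "'a set \<Rightarrow> ('a \<Rightarrow> 'a \<Rightarrow> bool) \<Rightarrow> bool" where
  "is_tree V E \<longleftrightarrow> graph_on V E \<and> V \<noteq> {} \<and> connected_graph V E \<and> \<not> (\<exists>c. is_cycle V E c)"

definition tree_path :: "'a set \<Rightarrow> ('a \<Rightarrow> 'a \<Rightarrow> bool) \<Rightarrow> 'a \<Rightarrow> 'a \<Rightarrow> 'a list" where
  "tree_path V E a b = (THE p. walk V E p \<and> distinct p \<and> hd p = a \<and> last p = b)"

definition gdist :: "'a set \<Rightarrow> ('a \<Rightarrow> 'a \<Rightarrow> bool) \<Rightarrow> 'a \<Rightarrow> 'a \<Rightarrow> nat" where
  "gdist V E u v = (LEAST k. \<exists>xs. walk V E xs \<and> hd xs = u \<and> last xs = v \<and> length xs = Suc k)"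

definition dist_to_path :: "'a set \<Rightarrow> ('a \<Rightarrow> 'a \<Rightarrow> bool) \<Rightarrow> 'a \<Rightarrow> 'a \<Rightarrow> 'a \<Rightarrow> nat" where
  "dist_to_path V E r a b = Min (gdist V E r ` set (tree_path V E a b))"

definition path_graph_with_ends :: "'a set \<Rightarrow> ('a \<Rightarrow> 'a \<Rightarrow> bool) \<Rightarrow> 'a \<Rightarrow> 'a \<Rightarrow> bool" where
  "path_graph_with_ends V E r a \<longleftrightarrow> (\<exists>p. distinct p \<and> set p = V \<and>
     (\<forall>u v. E u v \<longleftrightarrow> (\<exists>i. Suc i < length p \<and> {u, v} = {p ! i, p ! Suc i})) \<and>
     hd p = r \<and> last p = a)"

end

theory Submission
  imports Defs
begin

(*
  Write d b for d_{r,P_{a,b}} and N for the number of vertices.  Since a and b both lie on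
  P_{a,b}, d b <= min (dist r a) (dist r b).  Along a geodesic r = w_0, ..., w_m = a the vertex
  w_j therefore contributes at most j, and each of the k = N - m - 1 remaining vertices at most m,
  which gives 2 * sum d + k (k + 1) <= N (N - 1).  Equality forces k = 0: the geodesic from r to a
  visits every vertex, and then the tree is this path, since any further edge would be a chord
  shortening the geodesic.  Conversely, on a path p_0 = r, ..., p_{N-1} = a the path P_{a,p_j} is
  p_j, ..., p_{N-1}, whose vertices are all at distance at least j from r.  Finally the sum
  vanishes iff d a = dist r a = 0, since P_{a,a} = a.
*)

section \<open>Walks and geodesics\<close>

lemma walk_iff_successively:
  "walk V E xs \<longleftrightarrow> xs \<noteq> [] \<and> set xs \<subseteq> V \<and> successively E xs"
  by (simp add: walk_def successively_conv_nth)

lemma walk_take: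
  assumes "walk V E xs" "0 < n"
  shows "walk V E (take n xs)"
  using assms successively_append_iff[of E "take n xs" "drop n xs"]
  by (auto simp: walk_iff_successively dest: in_set_takeD)

lemma walk_drop:
  assumes "walk V E xs" "n < length xs"
  shows "walk V E (drop n xs)"
  using assms successively_append_iff[of E "take n xs" "drop n xs"]
  by (auto simp: walk_iff_successively dest: in_set_dropD)

lemma walk_rev:
  assumes "walk V E xs" "\<And>u v. E u v \<Longrightarrow> E v u"
  shows "walk V E (rev xs)"
  using assms by (auto simp: walk_iff_successively elim: successively_mono)

lemma walk_append:
  assumes "walk V E xs" "walk V E ys" "E (last xs) (hd ys)"
  shows "walk V E (xs @ ys)"
  using assms by (auto simp: walk_iff_successively successively_append_iff)

lemma walk_snocD:
  assumes "walk V E (xs @ [y])" "xs \<noteq> []"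
  shows "walk V E xs" "E (last xs) y"
  using assms unfolding walk_iff_successively successively_append_iff by auto

lemma gdist_le_length:
  assumes "walk V E xs"
  shows "Suc (gdist V E (hd xs) (last xs)) \<le> length xs"
proof -
  have "gdist V E (hd xs) (last xs) \<le> length xs - 1"
    unfolding gdist_def using assms by (intro Least_le exI[of _ xs]) (auto simp: walk_def)
  then show ?thesis
    using assms by (cases xs) (auto simp: walk_def)
qed

lemma gdist_self: "u \<in> V \<Longrightarrow> gdist V E u u = 0"
  using gdist_le_length[of V E "[u]"] by (simp add: walk_def)

lemma gdist_hd_nth_le:
  assumes "walk V E xs" "j < length xs"
  shows "gdist V E (hd xs) (xs ! j) \<le> j"
proof -
  have "hd (take (Suc j) xs) = hd xs"
    by (cases xs) simp_all
  moreover have "last (take (Suc j) xs) = xs ! j"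
    using assms(2) by (simp add: take_Suc_conv_app_nth)
  ultimately show ?thesis
    using gdist_le_length[OF walk_take[OF assms(1), of "Suc j"]] assms(2) by simp
qed

definition geodesic :: "'a set \<Rightarrow> ('a \<Rightarrow> 'a \<Rightarrow> bool) \<Rightarrow> 'a list \<Rightarrow> bool" where
  "geodesic V E xs \<longleftrightarrow> walk V E xs \<and> length xs = Suc (gdist V E (hd xs) (last xs))"

lemma geodesic_exists:
  assumes "connected_graph V E" "u \<in> V" "v \<in> V"
  obtains xs where "geodesic V E xs" "hd xs = u" "last xs = v"
proof -
  obtain xs where "walk V E xs" "hd xs = u" "last xs = v"
    using assms unfolding connected_graph_def by blast
  then have "\<exists>k xs. walk V E xs \<and> hd xs = u \<and> last xs = v \<and> length xs = Suc k"
    by (intro exI[of _ "length xs - 1"] exI[of _ xs]) (auto simp: walk_def)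
  then have "\<exists>xs. walk V E xs \<and> hd xs = u \<and> last xs = v \<and> length xs = Suc (gdist V E u v)"
    unfolding gdist_def by (rule LeastI_ex)
  then show ?thesis
    using that unfolding geodesic_def by blast
qed

lemma gdist_eq_0_iff:
  assumes "connected_graph V E" "u \<in> V" "v \<in> V"
  shows "gdist V E u v = 0 \<longleftrightarrow> u = v"
proof
  assume "gdist V E u v = 0"
  moreover obtain xs where "geodesic V E xs" "hd xs = u" "last xs = v"
    using geodesic_exists[OF assms] .
  ultimately show "u = v"
    by (cases xs) (auto simp: geodesic_def)
qed (simp add: gdist_self assms)

lemma geodesic_length_le:
  assumes "geodesic V E xs" "walk V E ys" "hd ys = hd xs" "last ys = last xs"
  shows "length xs \<le> length ys"
  using assms gdist_le_length[of V E ys] by (simp add: geodesic_def)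

lemma geodesic_distinct:
  assumes "geodesic V E xs"
  shows "distinct xs"
proof (rule ccontr)
  assume "\<not> distinct xs"
  then obtain ys y zs ws where xs: "xs = ys @ [y] @ zs @ [y] @ ws"
    using not_distinct_decomp by blast
  have "successively E ((ys @ [y]) @ (zs @ y # ws))"
    "successively E ((ys @ y # zs) @ (y # ws))" "set xs \<subseteq> V"
    using assms xs by (simp_all add: geodesic_def walk_iff_successively)
  then have "successively E (ys @ [y])" "successively E (y # ws)"
    unfolding successively_append_iff by blast+
  then have "walk V E (ys @ [y] @ ws)"
    using \<open>set xs \<subseteq> V\<close> xs
    by (auto simp: walk_iff_successively successively_append_iff successively_Cons)
  moreover have "hd (ys @ [y] @ ws) = hd xs" "last (ys @ [y] @ ws) = last xs"
    using xs by (cases ys; cases ws; simp)+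
  ultimately have "length xs \<le> length (ys @ [y] @ ws)"
    by (rule geodesic_length_le[OF assms])
  then show False
    using xs by simp
qed

lemma geodesic_no_chord:
  assumes "geodesic V E xs" "Suc i < j" "j < length xs"
  shows "\<not> E (xs ! i) (xs ! j)"
proof
  assume chord: "E (xs ! i) (xs ! j)"
  let ?ys = "take (Suc i) xs @ drop j xs"
  have "last (take (Suc i) xs) = xs ! i" "hd (drop j xs) = xs ! j"
    using assms(2,3) by (simp_all add: take_Suc_conv_app_nth hd_drop_conv_nth)
  then have "walk V E ?ys"
    using assms chord by (intro walk_append walk_take walk_drop) (auto simp: geodesic_def)
  moreover have "hd ?ys = hd xs" "last ?ys = last xs"
    using assms(2,3) by (cases xs; simp)+
  ultimately have "length xs \<le> length ?ys"
    by (rule geodesic_length_le[OF assms(1)])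
  then show False
    using assms(2,3) by simp
qed

section \<open>Unique paths in trees\<close>

lemma diverging_paths_imp_cycle:
  assumes sym: "\<And>u v. E u v \<Longrightarrow> E v u"
    and walks: "walk V E (x # ps)" "walk V E (x # qs)"
    and dist: "distinct (x # ps)" "distinct (x # qs)"
    and ne: "ps \<noteq> []" "qs \<noteq> []" and diverge: "hd ps \<noteq> hd qs"
    and meet: "set ps \<inter> set qs \<noteq> {}"
  shows "\<exists>c. is_cycle V E c"
proof -
  obtain p1 c ps' where ps: "ps = p1 @ c # ps'" "c \<in> set qs" "\<forall>y\<in>set p1. y \<notin> set qs"
    using meet split_list_first_prop[of ps "\<lambda>z. z \<in> set qs"] by blast
  obtain q1 qs' where qs: "qs = q1 @ c # qs'"
    using ps(2) split_list by metis
  let ?C = "(x # p1) @ rev (q1 @ [c])"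
  have "walk V E ((x # p1) @ [c])"
    using walk_take[OF walks(1), of "length p1 + 2"] ps(1) by simp
  then have "walk V E (x # p1)" "E (last (x # p1)) c"
    unfolding walk_iff_successively successively_append_iff by auto
  moreover have "walk V E (rev (q1 @ [c]))"
    using walk_rev[OF walk_take[OF walk_drop[OF walks(2), of 1], of "Suc (length q1)"] sym] qs
    by simp
  ultimately have "walk V E ?C"
    by (intro walk_append) simp_all
  moreover have "distinct ?C"
    using dist ps qs by auto
  moreover have "3 \<le> length ?C"
    using diverge ps(1) qs by (cases p1; cases q1) auto
  moreover have "E (last ?C) (hd ?C)"
    using walks(2) ne sym qs by (cases q1) (auto simp: walk_iff_successively successively_Cons)
  ultimately show ?thesis
    unfolding is_cycle_def by blast
qed

lemma acyclic_distinct_walks_eq: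
  assumes acyclic: "\<not> (\<exists>c. is_cycle V E c)" and sym: "\<And>u v. E u v \<Longrightarrow> E v u"
  shows "walk V E p \<Longrightarrow> walk V E q \<Longrightarrow> distinct p \<Longrightarrow> distinct q
    \<Longrightarrow> hd p = hd q \<Longrightarrow> last p = last q \<Longrightarrow> p = q"
proof (induction p arbitrary: q)
  case Nil
  then show ?case by (simp add: walk_def)
next
  case (Cons x ps)
  obtain qs where q: "q = x # qs"
    using Cons.prems by (cases q) (auto simp: walk_def)
  consider "ps = [] \<or> qs = []" | "ps \<noteq> []" "qs \<noteq> []" "hd ps = hd qs" | "ps \<noteq> []" "qs \<noteq> []" "hd ps \<noteq> hd qs"
    by blast
  then show ?case
  proof cases
    case 1
    then show ?thesis
      using Cons.prems q by (metis distinct.simps(2) last.simps last_in_set list.sel(1))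
  next
    case 2
    then have "ps = qs"
      using Cons.prems q by (intro Cons.IH) (auto dest: walk_drop[of _ _ _ 1])
    then show ?thesis
      using q by simp
  next
    case 3
    then have "last ps \<in> set ps \<inter> set qs"
      using Cons.prems q by (metis IntI last.simps last_in_set)
    then show ?thesis
      using diverging_paths_imp_cycle[OF sym Cons.prems(1) _ Cons.prems(3)] Cons.prems(2,4) q 3 acyclic
      by blast
  qed
qed

lemma tree_path_props:
  assumes tree: "is_tree V E" and "a \<in> V" "b \<in> V"
  shows "walk V E (tree_path V E a b) \<and> distinct (tree_path V E a b)
         \<and> hd (tree_path V E a b) = a \<and> last (tree_path V E a b) = b"
  unfolding tree_path_def
proof (rule theI')
  obtain xs where "geodesic V E xs" "hd xs = a" "last xs = b"
    using geodesic_exists assms unfolding is_tree_def by metis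
  moreover have "p = q"
    if "walk V E p" "walk V E q" "distinct p" "distinct q" "hd p = a" "hd q = a"
       "last p = b" "last q = b" for p q
    using acyclic_distinct_walks_eq[of V E p q] tree that
    by (simp add: is_tree_def graph_on_def)
  ultimately show "\<exists>!p. walk V E p \<and> distinct p \<and> hd p = a \<and> last p = b"
    using geodesic_distinct by (metis geodesic_def)
qed

lemma tree_path_eqI:
  assumes tree: "is_tree V E"
    and p: "walk V E p" "distinct p" "hd p = a" "last p = b"
  shows "tree_path V E a b = p"
proof -
  have "a \<in> V" "b \<in> V"
    using p by (auto simp: walk_def)
  then show ?thesis
    using acyclic_distinct_walks_eq[of V E "tree_path V E a b" p] tree_path_props[OF tree] tree p
    by (simp add: is_tree_def graph_on_def)
qed

lemma ends_in_tree_path: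
  assumes "is_tree V E" "a \<in> V" "b \<in> V"
  shows "a \<in> set (tree_path V E a b)" "b \<in> set (tree_path V E a b)"
  using tree_path_props[OF assms] by (metis hd_in_set last_in_set walk_def)+

lemma dist_to_path_le:
  assumes "is_tree V E" "a \<in> V" "b \<in> V" "c \<in> set (tree_path V E a b)"
  shows "dist_to_path V E r a b \<le> gdist V E r c"
  unfolding dist_to_path_def using assms by (intro Min_le) auto

lemma dist_to_path_attained:
  assumes "is_tree V E" "a \<in> V" "b \<in> V"
  obtains c where "c \<in> set (tree_path V E a b)" "dist_to_path V E r a b = gdist V E r c"
proof -
  have "dist_to_path V E r a b \<in> gdist V E r ` set (tree_path V E a b)"
    unfolding dist_to_path_def using ends_in_tree_path[OF assms] by (intro Min_in) auto
  then show ?thesis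
    using that by blast
qed

section \<open>The upper bound and its equality case\<close>

lemma double_sum_lessThan: "2 * (\<Sum>j<k. j) = k * (k - 1 :: nat)"
proof (induction k)
  case (Suc k)
  then show ?case
    by (cases k) (simp_all add: algebra_simps)
qed simp

lemma sum_distinct_conv_sum_nth:
  assumes "distinct w"
  shows "sum f (set w) = (\<Sum>j<length w. f (w ! j))"
  using sum_list_distinct_conv_sum_set[OF assms, of f]
  by (simp add: sum_list_sum_nth atLeast0LessThan)

lemma sum_le_staircase:
  fixes f :: "'a \<Rightarrow> nat"
  assumes fin: "finite V" and w: "distinct w" "set w \<subseteq> V"
    and bound: "\<And>b. b \<in> V \<Longrightarrow> f b < length w"
    and stair: "\<And>j. j < length w \<Longrightarrow> f (w ! j) \<le> j"
  shows "2 * sum f V + (card V - length w) * Suc (card V - length w) \<le> card V * (card V - 1)"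
proof (cases w)
  case Nil
  then show ?thesis
    using bound by fastforce
next
  case (Cons x xs)
  define m where "m = length w - 1"
  define k where "k = card V - length w"
  have "length w = card (set w)"
    using distinct_card[OF w(1)] by simp
  then have card_V: "card V = Suc m + k"
    using card_mono[OF fin w(2)] Cons by (simp add: m_def k_def)
  have "sum f (set w) = (\<Sum>j<length w. f (w ! j))"
    using sum_distinct_conv_sum_nth[OF w(1)] .
  also have "\<dots> \<le> (\<Sum>j<length w. j)"
    using stair by (intro sum_mono) simp
  finally have "2 * sum f (set w) \<le> Suc m * m"
    using double_sum_lessThan[of "length w"] Cons by (simp add: m_def)
  moreover have "card (V - set w) = k"
    using card_Diff_subset[OF finite_subset[OF w(2) fin] w(2)] distinct_card[OF w(1)]
    by (simp add: k_def)
  then have "sum f (V - set w) \<le> k * m"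
    using sum_bounded_above[of "V - set w" f m] bound Cons by (force simp: m_def)
  moreover have "sum f V = sum f (V - set w) + sum f (set w)"
    using sum.subset_diff[OF w(2) fin] .
  ultimately have "2 * sum f V \<le> Suc m * m + 2 * (k * m)"
    by linarith
  moreover have "card V * (card V - 1) = Suc m * m + 2 * (k * m) + k * Suc k"
    unfolding card_V by (simp add: algebra_simps)
  ultimately show ?thesis
    by (simp add: k_def)
qed

lemma sum_dist_to_path_deficit:
  assumes fin: "finite V" and tree: "is_tree V E" and r: "r \<in> V" and a: "a \<in> V"
  defines "k \<equiv> card V - Suc (gdist V E r a)"
  shows "2 * (\<Sum>b\<in>V. dist_to_path V E r a b) + k * Suc k \<le> card V * (card V - 1)"
proof -
  have "connected_graph V E"
    using tree by (simp add: is_tree_def)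
  then obtain w where w: "geodesic V E w" "hd w = r" "last w = a"
    using geodesic_exists r a by metis
  have "set w \<subseteq> V"
    using w(1) by (simp add: geodesic_def walk_def)
  moreover have "dist_to_path V E r a b < length w" if "b \<in> V" for b
    using dist_to_path_le[OF tree a that ends_in_tree_path(1)[OF tree a that], where r = r] w
    by (simp add: geodesic_def)
  moreover have "dist_to_path V E r a (w ! j) \<le> j" if "j < length w" for j
  proof -
    have wj: "w ! j \<in> V"
      using w(1) that by (auto simp: geodesic_def walk_def)
    have "dist_to_path V E r a (w ! j) \<le> gdist V E r (w ! j)"
      using dist_to_path_le[OF tree a wj ends_in_tree_path(2)[OF tree a wj]] .
    also have "\<dots> \<le> j"
      using gdist_hd_nth_le[of V E w j] w that by (simp add: geodesic_def)
    finally show ?thesis .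
  qed
  ultimately have "2 * (\<Sum>b\<in>V. dist_to_path V E r a b)
      + (card V - length w) * Suc (card V - length w) \<le> card V * (card V - 1)"
    by (intro sum_le_staircase[OF fin geodesic_distinct[OF w(1)]]) auto
  then show ?thesis
    using w by (simp add: k_def geodesic_def)
qed

lemma path_graph_with_ends_if_geodesic_spans:
  assumes graph: "graph_on V E" and w: "geodesic V E w" "set w = V"
  shows "path_graph_with_ends V E (hd w) (last w)"
proof -
  have sym: "E v u" if "E u v" for u v
    using graph that by (simp add: graph_on_def)
  have consecutive: "j = Suc i" if "E (w ! i) (w ! j)" "i < j" "j < length w" for i j
    using geodesic_no_chord[OF w(1), of i j] that by (cases "Suc i < j") auto
  have "E u v \<longleftrightarrow> (\<exists>i. Suc i < length w \<and> {u, v} = {w ! i, w ! Suc i})" for u v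
  proof
    assume "E u v"
    then have "u \<in> set w" "v \<in> set w"
      using graph w(2) by (auto simp: graph_on_def)
    then obtain i j where ij: "i < length w" "j < length w" "u = w ! i" "v = w ! j"
      by (metis in_set_conv_nth)
    have "i \<noteq> j"
      using \<open>E u v\<close> graph ij by (auto simp: graph_on_def)
    then consider "i < j" | "j < i"
      by linarith
    then show "\<exists>i. Suc i < length w \<and> {u, v} = {w ! i, w ! Suc i}"
    proof cases
      case 1
      then have "j = Suc i"
        using consecutive \<open>E u v\<close> ij by blast
      then show ?thesis
        using ij by blast
    next
      case 2
      then have "i = Suc j"
        using consecutive sym[OF \<open>E u v\<close>] ij by blast
      then show ?thesis
        using ij by (intro exI[of _ j]) auto
    qed
  next
    assume "\<exists>i. Suc i < length w \<and> {u, v} = {w ! i, w ! Suc i}"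
    then obtain i where "Suc i < length w" "{u, v} = {w ! i, w ! Suc i}"
      by blast
    moreover have "E (w ! i) (w ! Suc i)"
      using w(1) \<open>Suc i < length w\<close> by (auto simp: geodesic_def walk_def)
    ultimately show "E u v"
      using sym by (auto simp: doubleton_eq_iff)
  qed
  then show ?thesis
    unfolding path_graph_with_ends_def using geodesic_distinct[OF w(1)] w(2) by blast
qed

lemma path_graph_with_ends_if_gdist_ge:
  assumes fin: "finite V" and tree: "is_tree V E" and r: "r \<in> V" and a: "a \<in> V"
    and long: "card V \<le> Suc (gdist V E r a)"
  shows "path_graph_with_ends V E r a"
proof -
  have "connected_graph V E"
    using tree by (simp add: is_tree_def)
  then obtain w where w: "geodesic V E w" "hd w = r" "last w = a"
    using geodesic_exists r a by metis
  have "set w \<subseteq> V"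
    using w(1) by (auto simp: geodesic_def walk_def)
  moreover have "card (set w) = Suc (gdist V E r a)"
    using distinct_card[OF geodesic_distinct[OF w(1)]] w by (simp add: geodesic_def)
  ultimately have "set w = V"
    using card_seteq[OF fin] long by simp
  then show ?thesis
    using path_graph_with_ends_if_geodesic_spans[OF _ w(1)] tree w(2,3) by (simp add: is_tree_def)
qed

section \<open>Path graphs attain the upper bound\<close>

lemma path_graph_walk_index_bound:
  assumes p: "distinct p"
    and edges: "\<And>u v. E u v \<longleftrightarrow> (\<exists>i. Suc i < length p \<and> {u, v} = {p ! i, p ! Suc i})"
  shows "walk V E xs \<Longrightarrow> hd xs = p ! 0 \<Longrightarrow> k < length p \<Longrightarrow> last xs = p ! k \<Longrightarrow> k < length xs"
proof (induction xs arbitrary: k rule: rev_induct)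
  case Nil
  then show ?case by (simp add: walk_def)
next
  case (snoc y xs)
  show ?case
  proof (cases "xs = []")
    case True
    then have "p ! k = p ! 0"
      using snoc.prems by simp
    then show ?thesis
      using nth_eq_iff_index_eq[OF p snoc.prems(3), of 0] snoc.prems(3) by force
  next
    case False
    have IH: "l < length xs" if "l < length p" "last xs = p ! l" for l
      using snoc.IH[OF walk_snocD(1)[OF snoc.prems(1) False]] snoc.prems(2) False that by simp
    obtain i where i: "Suc i < length p" "{last xs, y} = {p ! i, p ! Suc i}"
      using edges walk_snocD(2)[OF snoc.prems(1) False] by blast
    then consider "last xs = p ! i" "y = p ! Suc i" | "last xs = p ! Suc i" "y = p ! i"
      by (auto simp: doubleton_eq_iff)
    then show ?thesis
    proof cases
      case 1
      then have "k = Suc i"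
        using nth_eq_iff_index_eq[OF p snoc.prems(3) i(1)] snoc.prems(4) by simp
      then show ?thesis
        using IH[of i] 1 i(1) by simp
    next
      case 2
      then have "k = i"
        using nth_eq_iff_index_eq[OF p snoc.prems(3), of i] i(1) snoc.prems(4) by simp
      then show ?thesis
        using IH[of "Suc i"] 2 i(1) by simp
    qed
  qed
qed

lemma path_graph_gdist_ge:
  assumes conn: "connected_graph V E" and p: "distinct p" "set p = V"
    and edges: "\<And>u v. E u v \<longleftrightarrow> (\<exists>i. Suc i < length p \<and> {u, v} = {p ! i, p ! Suc i})"
    and k: "k < length p"
  shows "k \<le> gdist V E (p ! 0) (p ! k)"
proof -
  have "p ! 0 \<in> V" "p ! k \<in> V"
    using p(2) k by (auto intro: nth_mem)
  then obtain w where w: "geodesic V E w" "hd w = p ! 0" "last w = p ! k"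
    using geodesic_exists[OF conn] by metis
  then have "k < length w"
    using path_graph_walk_index_bound[OF p(1) edges, of V w k] k by (simp add: geodesic_def)
  then show ?thesis
    using w by (simp add: geodesic_def)
qed

lemma dist_to_path_path_graph_ge:
  assumes tree: "is_tree V E" and p: "distinct p" "set p = V"
    and edges: "\<And>u v. E u v \<longleftrightarrow> (\<exists>i. Suc i < length p \<and> {u, v} = {p ! i, p ! Suc i})"
    and j: "j < length p"
  shows "j \<le> dist_to_path V E (hd p) (last p) (p ! j)"
proof -
  have sym: "E v u" if "E u v" for u v
    using tree that by (simp add: is_tree_def graph_on_def)
  have "walk V E p"
    using p j edges by (auto simp: walk_def)
  then have "walk V E (rev (drop j p))"
    using j sym by (intro walk_rev walk_drop)
  moreover have "hd (rev (drop j p)) = last p" "last (rev (drop j p)) = p ! j"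
    using j by (simp_all add: hd_rev last_rev last_drop hd_drop_conv_nth)
  ultimately have path: "tree_path V E (last p) (p ! j) = rev (drop j p)"
    using tree_path_eqI[OF tree] p(1) by simp
  have "p \<noteq> []"
    using j by auto
  then have "last p \<in> V" "p ! j \<in> V"
    using p(2) j by auto
  then obtain c where c: "c \<in> set (drop j p)"
    "dist_to_path V E (hd p) (last p) (p ! j) = gdist V E (hd p) c"
    using dist_to_path_attained[OF tree] path by (metis set_rev)
  then obtain s where "s < length p - j" "c = p ! (j + s)"
    by (auto simp: in_set_conv_nth)
  then have "j + s \<le> gdist V E (p ! 0) c"
    using path_graph_gdist_ge[OF _ p edges, of "j + s"] tree by (simp add: is_tree_def)
  then show ?thesis
    using c(2) hd_conv_nth[OF \<open>p \<noteq> []\<close>] by simp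
qed

lemma sum_dist_to_path_path_graph_ge:
  assumes fin: "finite V" and tree: "is_tree V E" and path: "path_graph_with_ends V E r a"
  shows "card V * (card V - 1) \<le> 2 * (\<Sum>b\<in>V. dist_to_path V E r a b)"
proof -
  obtain p where p: "distinct p" "set p = V"
    "\<And>u v. E u v \<longleftrightarrow> (\<exists>i. Suc i < length p \<and> {u, v} = {p ! i, p ! Suc i})"
    "hd p = r" "last p = a"
    using path unfolding path_graph_with_ends_def by blast
  have "card V * (card V - 1) = 2 * (\<Sum>j<length p. j)"
    using double_sum_lessThan distinct_card[OF p(1)] p(2) by simp
  also have "\<dots> \<le> 2 * (\<Sum>j<length p. dist_to_path V E r a (p ! j))"
    using dist_to_path_path_graph_ge[OF tree p(1-3)] p(4,5) by (intro mult_le_mono2 sum_mono) simp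
  also have "\<dots> = 2 * (\<Sum>b\<in>V. dist_to_path V E r a b)"
    using sum_distinct_conv_sum_nth[OF p(1), of "dist_to_path V E r a"] p(2) by simp
  finally show ?thesis .
qed

lemma sum_dist_to_path_eq_0_iff:
  assumes fin: "finite V" and tree: "is_tree V E" and r: "r \<in> V" and a: "a \<in> V"
  shows "(\<Sum>b\<in>V. dist_to_path V E r a b) = 0 \<longleftrightarrow> r = a"
proof
  assume "r = a"
  have "dist_to_path V E r a b \<le> gdist V E r a" if "b \<in> V" for b
    using dist_to_path_le[OF tree a that ends_in_tree_path(1)[OF tree a that]] .
  then show "(\<Sum>b\<in>V. dist_to_path V E r a b) = 0"
    using gdist_self[OF r] \<open>r = a\<close> fin by simp
next
  assume "(\<Sum>b\<in>V. dist_to_path V E r a b) = 0"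
  then have "dist_to_path V E r a a = 0"
    using fin a by simp
  moreover have "tree_path V E a a = [a]"
    using tree_path_eqI[OF tree, of "[a]"] a by (simp add: walk_def)
  ultimately have "gdist V E r a = 0"
    using dist_to_path_attained[OF tree a a, of r] by auto
  then show "r = a"
    using gdist_eq_0_iff[of V E r a] tree r a by (simp add: is_tree_def)
qed

theorem lemma2p7:
  fixes n :: nat and E :: "nat \<Rightarrow> nat \<Rightarrow> bool" and r a :: nat
  assumes "is_tree {1..n} E" and "r \<in> {1..n}" and "a \<in> {1..n}"
  shows "0 \<le> 2 * (\<Sum>b=1..n. dist_to_path {1..n} E r a b)
       \<and> 2 * (\<Sum>b=1..n. dist_to_path {1..n} E r a b) \<le> n * (n - 1)
       \<and> (2 * (\<Sum>b=1..n. dist_to_path {1..n} E r a b) = n * (n - 1)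
            \<longleftrightarrow> path_graph_with_ends {1..n} E r a)
       \<and> (2 * (\<Sum>b=1..n. dist_to_path {1..n} E r a b) = 0 \<longleftrightarrow> r = a)"
proof -
  let ?S = "\<Sum>b=1..n. dist_to_path {1..n} E r a b"
  let ?k = "n - Suc (gdist {1..n} E r a)"
  have deficit: "2 * ?S + ?k * Suc ?k \<le> n * (n - 1)"
    using sum_dist_to_path_deficit[OF _ assms] by simp
  have "path_graph_with_ends {1..n} E r a" if "2 * ?S = n * (n - 1)"
  proof -
    have "?k = 0"
      using deficit that by simp
    then show ?thesis
      using path_graph_with_ends_if_gdist_ge[OF _ assms] by simp
  qed
  moreover have "n * (n - 1) \<le> 2 * ?S" if "path_graph_with_ends {1..n} E r a"
    using sum_dist_to_path_path_graph_ge[OF _ assms(1) that] by simp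
  ultimately show ?thesis
    using deficit sum_dist_to_path_eq_0_iff[OF _ assms] by (auto intro: antisym)
qed

end
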